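(* Let $k\ge 4$ and let $G=(V,E)$ be the cycle graph of the cycle $C=(v_0,\ldots,v_{k-1})$, i.e. $V=V(C)$ and $E=\textnormal{ext}(C)$, with vertex indices taken modulo $k$. For every $i$, the inequality $$x_{\{v_{i-1},v_{i+1}\}}+\sum_{\substack{f\in E^c:\ v_i\in f,\\ f\cap\{v_{i-1},v_{i+1}\}=\emptyset}}x_f\ \ge\ 1$$ is valid and facet-defining for $\textnormal{conv}(X(G))$.
   Context: $\textnormal{ext}(C)=\{\{v_{i-1},v_i\}\}_{i=1}^{k-1}\cup\{\{v_{k-1},v_0\}\}$, $\textnormal{int}(C)=\binom{V(C)}{2}\setminus\textnormal{ext}(C)$, $E^c=\binom{V}{2}\setminus E=\textnormal{int}(C)$. For $x\in\{0,1\}^{E^c}$, $E(x)=\{f:x_f=1\}$ and $X(G)=\{x\in\{0,1\}^{E^c}:(V,E\cup E(x))\text{ is chordal}\}$; a graph is chordal if every cycle with at least four vertices has a chord. *)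

theory Defs
  imports "HOL-Analysis.Analysis"
begin

text \<open>Cycle C = (v_0,...,v_{k-1}) with v_i represented by the natural number i < k.
  Edges (and non-edges) are 2-element sets of vertices.\<close>

definition two_subsets :: "nat set \<Rightarrow> nat set set" where
  "two_subsets V = {e. \<exists>a b. a \<in> V \<and> b \<in> V \<and> a \<noteq> b \<and> e = {a, b}}"

definition cyc_ext :: "nat \<Rightarrow> nat set set" where
  "cyc_ext k = {{i, (i + 1) mod k} | i. i < k}"

definition cyc_Ec :: "nat \<Rightarrow> nat set set" where
  "cyc_Ec k = two_subsets {0..<k} - cyc_ext k"

definition chordal :: "nat set \<Rightarrow> nat set set \<Rightarrow> bool" where
  "chordal V F \<longleftrightarrow>
     (\<forall>vs. distinct vs \<and> set vs \<subseteq> V \<and> length vs \<ge> 4 \<and>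
        (\<forall>i < length vs. {vs ! i, vs ! ((i + 1) mod length vs)} \<in> F)
      \<longrightarrow> (\<exists>i j. i < length vs \<and> j < length vs \<and> i \<noteq> j \<and>
             j \<noteq> (i + 1) mod length vs \<and> i \<noteq> (j + 1) mod length vs \<and>
             {vs ! i, vs ! j} \<in> F))"

text \<open>R^{E^c} is represented as the type real ^ 'e via a bijection idx from the finite
  index type 'e onto E^c. X(G) is the set of 0/1 vectors x with (V, E \<union> E(x)) chordal.\<close>

definition XG :: "nat \<Rightarrow> ('e::finite \<Rightarrow> nat set) \<Rightarrow> (real ^ 'e) set" where
  "XG k idx = {x. (\<forall>e. x $ e = 0 \<or> x $ e = 1) \<and>
                  chordal {0..<k} (cyc_ext k \<union> {idx e | e. x $ e = 1})}"

definition ineq_lhs :: "nat \<Rightarrow> ('e::finite \<Rightarrow> nat set) \<Rightarrow> nat \<Rightarrow> real ^ 'e \<Rightarrow> real" where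
  "ineq_lhs k idx i x =
     (let p = (i + k - 1) mod k; n = (i + 1) mod k in
      (\<Sum>e \<in> {e. idx e = {p, n}}. x $ e) +
      (\<Sum>e \<in> {e. i \<in> idx e \<and> idx e \<inter> {p, n} = {}}. x $ e))"

end

theory Submission
  imports Defs
begin

text \<open>If neither the chord {v(i-1), v(i+1)} nor any spoke {v(i), v(j)} with j \<notin> {i-1, i+1} is
  added, then v(i) keeps its two cycle neighbours as its only neighbours, and they stay non-adjacent.
  In a chordal graph a long cycle through such a vertex can always be shortened along a chord avoiding
  it, which is absurd; applied to the Hamiltonian cycle this proves validity.

  For the facet property, X(G) is full-dimensional since the complete graph and the complete graph
  minus any one edge are chordal. The face contains the graph of all non-spoke edges (v(i) is simplicial
  in it and the rest is complete), this graph minus any further non-spoke edge, and for every spoke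
  the fan at its far end (the cycle plus all chords through one vertex). Their differences span the
  direction space of the hyperplane.\<close>

definition graph_cycle :: "nat set set \<Rightarrow> nat list \<Rightarrow> bool" where
  "graph_cycle F vs \<longleftrightarrow> distinct vs \<and> (\<forall>t < length vs. {vs ! t, vs ! ((t + 1) mod length vs)} \<in> F)"

definition has_chord :: "nat set set \<Rightarrow> nat list \<Rightarrow> bool" where
  "has_chord F vs \<longleftrightarrow> (\<exists>i j. i < length vs \<and> j < length vs \<and> i \<noteq> j \<and>
     j \<noteq> (i + 1) mod length vs \<and> i \<noteq> (j + 1) mod length vs \<and> {vs ! i, vs ! j} \<in> F)"

lemma chordal_iff_cycles_have_chords:
  "chordal V F \<longleftrightarrow> (\<forall>vs. graph_cycle F vs \<and> set vs \<subseteq> V \<and> 4 \<le> length vs \<longrightarrow> has_chord F vs)"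
  unfolding chordal_def graph_cycle_def has_chord_def by blast

definition simplicial :: "nat set set \<Rightarrow> nat set \<Rightarrow> nat \<Rightarrow> bool" where
  "simplicial F W v \<longleftrightarrow>
     (\<forall>a\<in>W. \<forall>b\<in>W. a \<noteq> v \<longrightarrow> b \<noteq> v \<longrightarrow> a \<noteq> b \<longrightarrow> {v, a} \<in> F \<longrightarrow> {v, b} \<in> F \<longrightarrow> {a, b} \<in> F)"

lemma chordal_if_simplicial_vertices:
  assumes "\<And>W. W \<subseteq> V \<Longrightarrow> 4 \<le> card W \<Longrightarrow> \<exists>v\<in>W. simplicial F W v"
  shows "chordal V F"
  unfolding chordal_iff_cycles_have_chords
proof (intro allI impI)
  fix vs assume vs: "graph_cycle F vs \<and> set vs \<subseteq> V \<and> 4 \<le> length vs"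
  define L where "L = length vs"
  have L: "4 \<le> L" and dist: "distinct vs" and cyc: "\<forall>t<L. {vs ! t, vs ! ((t + 1) mod L)} \<in> F"
    using vs by (auto simp: L_def graph_cycle_def)
  have "4 \<le> card (set vs)" using vs by (simp add: distinct_card graph_cycle_def)
  then obtain m where m: "m < L" and m_simplicial: "simplicial F (set vs) (vs ! m)"
    using assms vs by (metis L_def in_set_conv_nth)
  define succ where "succ = (if m + 1 = L then 0 else m + 1)"
  define pred where "pred = (if m = 0 then L - 1 else m - 1)"
  have nbr: "(m + 1) mod L = succ" "(pred + 1) mod L = m" "succ < L" "pred < L" "succ \<noteq> m"
    "pred \<noteq> m" "succ \<noteq> pred"
    using m L by (auto simp: succ_def pred_def)
  have "(succ + 1) mod L = (if succ + 1 = L then 0 else succ + 1)"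
    using m by (simp add: succ_def)
  then have chord_nbr: "pred \<noteq> (succ + 1) mod L" using m L by (auto simp: succ_def pred_def)
  have "{vs ! m, vs ! succ} \<in> F" "{vs ! m, vs ! pred} \<in> F"
    using cyc[rule_format, OF m] cyc[rule_format, OF nbr(4)] nbr(1,2) by (auto simp: insert_commute)
  moreover have "vs ! succ \<noteq> vs ! m" "vs ! pred \<noteq> vs ! m" "vs ! succ \<noteq> vs ! pred"
    using dist m nbr by (auto simp: nth_eq_iff_index_eq L_def)
  ultimately have "{vs ! succ, vs ! pred} \<in> F"
    using m_simplicial nbr(3,4) by (auto simp: simplicial_def L_def)
  then show "has_chord F vs"
    unfolding has_chord_def using nbr chord_nbr by (metis L_def)
qed

lemma graph_cycle_shortcut:
  assumes cyc: "graph_cycle F vs" and ab: "a < b" "b < length vs" and chord: "{vs ! a, vs ! b} \<in> F"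
  shows "graph_cycle F (take (Suc a) vs @ drop b vs)"
proof -
  define L where "L = length vs"
  define ws where "ws = take (Suc a) vs @ drop b vs"
  define L' where "L' = Suc a + L - b"
  have len: "length ws = L'" using ab by (simp add: ws_def L'_def L_def)
  have ws_nth: "ws ! t = vs ! (if t \<le> a then t else b + t - Suc a)" if "t < L'" for t
    using that ab by (auto simp: ws_def L'_def L_def nth_append)
  have edges: "{vs ! t, vs ! ((t + 1) mod L)} \<in> F" if "t < L" for t
    using cyc that by (simp add: graph_cycle_def L_def)
  have "{ws ! t, ws ! ((t + 1) mod L')} \<in> F" if t: "t < L'" for t
  proof -
    consider "t < a" | "t = a" | "a < t" "t + 1 < L'" | "t + 1 = L'" using t by linarith
    then show ?thesis
    proof cases
      case 1
      then show ?thesis using edges[of t] ab ws_nth[of t] ws_nth[of "t + 1"] t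
        by (simp add: L'_def L_def)
    next
      case 2
      then show ?thesis using chord ab ws_nth[of t] ws_nth[of "t + 1"] t
        by (simp add: L'_def L_def)
    next
      case 3
      then have "(b + t - Suc a + 1) mod L = b + (t + 1) - Suc a" and "b + t - Suc a < L"
        using ab by (auto simp: L'_def L_def)
      then show ?thesis using 3 edges[of "b + t - Suc a"] ws_nth[of t] ws_nth[of "t + 1"]
        by simp
    next
      case 4
      then have "\<not> t \<le> a" "b + t - Suc a = L - 1" using ab by (auto simp: L'_def L_def)
      then have "ws ! t = vs ! (L - 1)" "ws ! 0 = vs ! 0" using 4 ws_nth[of t] ws_nth[of 0]
        by auto
      moreover have "Suc (L - 1) = L" using ab by (simp add: L_def)
      ultimately show ?thesis using 4 edges[of "L - 1"] by simp
    qed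
  qed
  moreover have "distinct ws"
    using cyc ab set_take_disj_set_drop_if_distinct[of vs "Suc a" b]
    by (simp add: ws_def graph_cycle_def)
  ultimately show ?thesis by (simp add: graph_cycle_def ws_def[symmetric] len)
qed

lemma chordal_no_cycle_through_degree_two_vertex:
  assumes ch: "chordal V F" and np: "{n, p} \<notin> F" and nbrs: "\<And>w. {i, w} \<in> F \<Longrightarrow> w \<in> {p, n, i}"
    and "graph_cycle F vs" "set vs \<subseteq> V" "4 \<le> length vs"
    and "vs ! 0 = i" "vs ! 1 = n" "vs ! (length vs - 1) = p"
  shows False
  using assms(4-)
proof (induction "length vs" arbitrary: vs rule: less_induct)
  \<comment> \<open>A chord avoids \<open>i\<close> and is not \<open>{n, p}\<close>; cutting along it keeps \<open>p, i, n\<close> consecutive.\<close>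
  case less
  define L where "L = length vs"
  have dist: "vs ! x = vs ! y \<longleftrightarrow> x = y" if "x < L" "y < L" for x y
    using less.prems(1) that by (simp add: graph_cycle_def nth_eq_iff_index_eq L_def)
  obtain u w where uw: "u < L" "w < L" "u \<noteq> w" "w \<noteq> (u + 1) mod L" "u \<noteq> (w + 1) mod L"
    "{vs ! u, vs ! w} \<in> F"
    using ch less.prems unfolding chordal_iff_cycles_have_chords has_chord_def L_def by blast
  obtain a b where ab: "a < b" "b < L" "b \<noteq> (a + 1) mod L" "a \<noteq> (b + 1) mod L"
    "{vs ! a, vs ! b} \<in> F"
  proof (cases "u < w")
    case True
    then show ?thesis using uw by (intro that[of u w]) auto
  next
    case False
    then show ?thesis using uw by (intro that[of w u]) (auto simp: insert_commute)
  qed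
  have ab_step: "b \<noteq> a + 1" using ab(1-3) by simp
  have ab_wrap: "\<not> (a = 0 \<and> b = L - 1)" using ab(2,4) by auto
  have "a \<noteq> 0"
  proof
    assume "a = 0"
    then have "vs ! b \<in> {vs ! (L - 1), vs ! 1, vs ! 0}"
      using nbrs ab(5) less.prems(4-) by (simp add: L_def)
    moreover have "0 < L" "1 < L" "L - 1 < L" using less.prems(3) by (auto simp: L_def)
    ultimately have "b = L - 1 \<or> b = 1 \<or> b = 0"
      using dist[of b "L - 1"] dist[of b 1] dist[of b 0] ab(2) by blast
    then show False using ab(1) ab_step ab_wrap \<open>a = 0\<close> by auto
  qed
  show False
  proof (cases "a = 1 \<and> b = L - 1")
    case True
    then show ?thesis using ab(5) np less.prems(5,6) by (simp add: L_def insert_commute)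
  next
    case False
    define ws where "ws = take (Suc a) vs @ drop b vs"
    have len: "length ws = Suc a + L - b" using ab by (simp add: ws_def L_def)
    have "ws ! 0 = i" "ws ! 1 = n" "ws ! (length ws - 1) = p"
      using ab \<open>a \<noteq> 0\<close> less.prems(4-) by (auto simp: ws_def L_def nth_append)
    moreover have "graph_cycle F ws"
      unfolding ws_def using less.prems(1) ab by (intro graph_cycle_shortcut) (auto simp: L_def)
    moreover have "set ws \<subseteq> V"
      using less.prems(2) set_take_subset[of "Suc a" vs] set_drop_subset[of b vs] by (auto simp: ws_def)
    moreover have "4 \<le> length ws" "length ws < length vs"
      using ab(1,2) ab_step \<open>a \<noteq> 0\<close> False len by (auto simp: L_def)
    ultimately show False using less.hyps by blast
  qed
qed

lemma chordal_if_simplicial_vertex_and_complete_but_one_pair: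
  assumes "simplicial F V v"
    and "\<And>a b. a \<in> V \<Longrightarrow> b \<in> V \<Longrightarrow> a \<noteq> b \<Longrightarrow> a \<noteq> v \<Longrightarrow> b \<noteq> v \<Longrightarrow> {a, b} \<noteq> {r1, r2} \<Longrightarrow> {a, b} \<in> F"
  shows "chordal V F"
proof (rule chordal_if_simplicial_vertices)
  fix W assume W: "W \<subseteq> V" "4 \<le> card W"
  show "\<exists>u\<in>W. simplicial F W u"
  proof (cases "v \<in> W")
    case True
    then show ?thesis using assms(1) W(1) by (auto simp: simplicial_def)
  next
    case False
    obtain u where "u \<in> W" "v \<notin> W - {u}" "r1 \<notin> W - {u}"
      using W(2) False by (cases "r1 \<in> W") (fastforce dest: card_ge_0_finite)+
    then have "simplicial F W u"
      using assms(2) W(1) by (auto simp: simplicial_def doubleton_eq_iff)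
    then show ?thesis using \<open>u \<in> W\<close> by blast
  qed
qed

lemma cyc_ext_iff:
  assumes "0 < k"
  shows "{a, b} \<in> cyc_ext k \<longleftrightarrow> a < k \<and> b < k \<and> (b = (a + 1) mod k \<or> a = (b + 1) mod k)"
  using assms by (auto simp: cyc_ext_def doubleton_eq_iff insert_commute)

lemma cyc_Ec_iff: "{a, b} \<in> cyc_Ec k \<longleftrightarrow> a < k \<and> b < k \<and> a \<noteq> b \<and> {a, b} \<notin> cyc_ext k"
  by (auto simp: cyc_Ec_def two_subsets_def doubleton_eq_iff)

lemma cyc_Ec_elim:
  assumes "E \<in> cyc_Ec k"
  obtains a b where "E = {a, b}" "a < k" "b < k" "a \<noteq> b"
  using assms by (auto simp: cyc_Ec_def two_subsets_def)

lemma exists_without_cyclic_predecessor: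
  fixes W :: "nat set"
  assumes "W \<subseteq> {0..<k}" "j < k" "j \<notin> W" "W \<noteq> {}"
  obtains v where "v \<in> W" "\<And>u. u \<in> W \<Longrightarrow> v \<noteq> (u + 1) mod k"
proof (cases "\<exists>w\<in>W. j < w")
  case True
  define v where "v = Min {w\<in>W. j < w}"
  have fin: "finite W" using assms(1) finite_subset by blast
  have "v \<in> {w\<in>W. j < w}" unfolding v_def using fin True by (intro Min_in) auto
  then have v: "v \<in> W" "j < v" by auto
  have "v \<noteq> (u + 1) mod k" if "u \<in> W" for u
  proof
    assume "v = (u + 1) mod k"
    moreover have "u < k" using assms(1) that by auto
    ultimately have "v = u + 1" using v by (cases "u + 1 = k") auto
    moreover have "u \<noteq> j" using assms(3) that by auto
    ultimately have "j < u" using v by linarith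
    then have "v \<le> u" using fin that by (auto simp: v_def intro: Min_le)
    then show False using \<open>v = u + 1\<close> by simp
  qed
  then show ?thesis using that v by blast
next
  case False
  define v where "v = Min W"
  have fin: "finite W" using assms(1) finite_subset by blast
  then have v: "v \<in> W" using assms(4) by (simp add: v_def)
  have "v \<noteq> (u + 1) mod k" if "u \<in> W" for u
  proof
    assume "v = (u + 1) mod k"
    moreover have "u < j" using False assms(3) that by (metis linorder_neqE_nat)
    ultimately have "v = u + 1" using assms(2) by simp
    moreover have "v \<le> u" using fin that by (simp add: v_def)
    ultimately show False by simp
  qed
  then show ?thesis using that v by blast
qed

lemma chordal_cycle_with_apex:
  assumes j: "j < k"
    and F_sub: "\<And>E. E \<in> F \<Longrightarrow> E \<in> cyc_ext k \<or> j \<in> E"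
    and apex_edges: "\<And>a. a < k \<Longrightarrow> a \<noteq> j \<Longrightarrow> {j, a} \<in> F"
  shows "chordal {0..<k} F"
proof (rule chordal_if_simplicial_vertices)
  fix W assume W: "W \<subseteq> {0..<k}" "4 \<le> card W"
  have "W - {j} \<noteq> {}"
  proof
    assume "W - {j} = {}"
    then have "card W \<le> 1" using card_mono[of "{j}" W] by auto
    then show False using W(2) by simp
  qed
  then obtain v where v: "v \<in> W - {j}" and no_pred: "\<And>u. u \<in> W - {j} \<Longrightarrow> v \<noteq> (u + 1) mod k"
    using exists_without_cyclic_predecessor[of "W - {j}" k j] W(1) j by blast
  have nbrs: "u = j \<or> u = (v + 1) mod k" if "u \<in> W" "{v, u} \<in> F" for u
    using F_sub[OF that(2)] no_pred[of u] v that(1) j cyc_ext_iff[of k v u] by auto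
  have "simplicial F W v"
    unfolding simplicial_def
  proof (intro ballI impI)
    fix a b assume "a \<in> W" "b \<in> W" "a \<noteq> v" "b \<noteq> v" "a \<noteq> b" "{v, a} \<in> F" "{v, b} \<in> F"
    then have "j \<in> {a, b}" using nbrs by blast
    then show "{a, b} \<in> F"
      using apex_edges[of a] apex_edges[of b] W(1) \<open>a \<in> W\<close> \<open>b \<in> W\<close> \<open>a \<noteq> b\<close> by (auto simp: insert_commute)
  qed
  then show "\<exists>v\<in>W. simplicial F W v" using v by blast
qed

lemma sum_scaleR_axis_component:
  "(\<Sum>e\<in>A. f e *\<^sub>R axis e 1) $ i = (if i \<in> A then f i else (0::real))"
proof -
  have "(\<Sum>e\<in>A. f e *\<^sub>R axis e 1) $ i = (\<Sum>e\<in>A. f e * (if i = e then 1 else 0))"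
    by (simp add: axis_def)
  also have "\<dots> = (\<Sum>e\<in>A. if e = i then f e else 0)"
    by (intro sum.cong) auto
  finally show ?thesis by (simp add: sum.delta')
qed

lemma span_of_vector_supported_on:
  fixes v :: "real ^ 'n"
  assumes "\<And>e. e \<in> A \<Longrightarrow> axis e 1 \<in> span T" and "\<And>e. e \<notin> A \<Longrightarrow> v $ e = 0"
  shows "v \<in> span T"
proof -
  have "v = (\<Sum>e\<in>A. v $ e *\<^sub>R axis e 1)"
    unfolding vec_eq_iff sum_scaleR_axis_component using assms(2) by auto
  also have "\<dots> \<in> span T"
    using assms(1) by (intro span_sum span_scale)
  finally show ?thesis .
qed

lemma span_of_vector_in_hyperplane:
  fixes v :: "real ^ 'n"
  assumes "a \<notin> S"
    and "\<And>e. e \<notin> insert a S \<Longrightarrow> axis e 1 \<in> span T"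
    and "\<And>s. s \<in> S \<Longrightarrow> axis s 1 - axis a 1 \<in> span T"
    and "v $ a + (\<Sum>s\<in>S. v $ s) = 0"
  shows "v \<in> span T"
proof -
  define u :: "real ^ 'n" where "u = (\<Sum>s\<in>S. v $ s *\<^sub>R (axis s 1 - axis a 1))"
  have u_split: "u = (\<Sum>s\<in>S. v $ s *\<^sub>R axis s 1) - (\<Sum>s\<in>S. v $ s) *\<^sub>R axis a 1"
    unfolding u_def by (simp add: scaleR_diff_right sum_subtractf scaleR_sum_left)
  have u_comp: "u $ e = (if e \<in> S then v $ e else 0) - (if e = a then (\<Sum>s\<in>S. v $ s) else 0)" for e
    unfolding u_split
    by (simp only: vector_minus_component sum_scaleR_axis_component vector_scaleR_component)
      (simp add: axis_def)
  have "v - u \<in> span T"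
  proof (rule span_of_vector_supported_on)
    show "axis e 1 \<in> span T" if "e \<in> - insert a S" for e
      using assms(2) that by simp
    show "(v - u) $ e = 0" if "e \<notin> - insert a S" for e
      using u_comp[of e] that assms(1,4) by auto
  qed
  moreover have "u \<in> span T"
    unfolding u_def using assms(3) by (intro span_sum span_scale)
  ultimately have "(v - u) + u \<in> span T" by (rule span_add)
  then show ?thesis by simp
qed

lemma affine_hull_eq_UNIV_if_unit_steps:
  fixes X :: "(real ^ 'n) set"
  assumes "y \<in> X" and "\<And>e. y - axis e 1 \<in> X"
  shows "affine hull X = UNIV"
proof -
  have "axis e 1 \<in> span ((\<lambda>x. - y + x) ` X)" for e
  proof -
    have "- axis e 1 \<in> span ((\<lambda>x. - y + x) ` X)"
      using assms(2)[of e] by (intro span_base image_eqI[of _ _ "y - axis e 1"]) auto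
    then show ?thesis using span_neg by fastforce
  qed
  then have "span ((\<lambda>x. - y + x) ` X) = UNIV"
    using span_of_vector_supported_on[of UNIV] by blast
  then show ?thesis
    using affine_hull_span_gen[OF hull_inc[OF assms(1)]] by (metis surj_plus)
qed

lemma hyperplane_facet_of_convex_hull:
  fixes c :: "'a::euclidean_space"
  assumes valid: "\<And>x. x \<in> X \<Longrightarrow> 1 \<le> c \<bullet> x"
    and full: "affine hull X = UNIV"
    and tight: "{x. c \<bullet> x = 1} \<subseteq> affine hull (X \<inter> {x. c \<bullet> x = 1})"
    and "c \<noteq> 0"
  shows "(\<forall>x \<in> convex hull X. 1 \<le> c \<bullet> x) \<and>
         (convex hull X \<inter> {x. c \<bullet> x = 1}) face_of convex hull X \<and>
         aff_dim (convex hull X \<inter> {x. c \<bullet> x = 1}) = aff_dim (convex hull X) - 1"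
proof (intro conjI)
  have halfspace: "convex hull X \<subseteq> {x. 1 \<le> c \<bullet> x}"
    using valid by (intro hull_minimal) (auto simp: convex_halfspace_ge)
  then show "\<forall>x \<in> convex hull X. 1 \<le> c \<bullet> x" by blast
  show "(convex hull X \<inter> {x. c \<bullet> x = 1}) face_of convex hull X"
    using halfspace by (intro face_of_Int_supporting_hyperplane_ge convex_convex_hull) auto
  have "affine hull (convex hull X \<inter> {x. c \<bullet> x = 1}) = {x. c \<bullet> x = 1}"
  proof
    show "affine hull (convex hull X \<inter> {x. c \<bullet> x = 1}) \<subseteq> {x. c \<bullet> x = 1}"
      by (intro hull_minimal) (auto simp: affine_hyperplane)
    show "{x. c \<bullet> x = 1} \<subseteq> affine hull (convex hull X \<inter> {x. c \<bullet> x = 1})"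
      using tight hull_subset[of X convex] by (meson Int_mono hull_mono order_refl subset_trans)
  qed
  then have "aff_dim (convex hull X \<inter> {x. c \<bullet> x = 1}) = DIM('a) - 1"
    using \<open>c \<noteq> 0\<close> by (metis aff_dim_affine_hull aff_dim_hyperplane)
  moreover have "aff_dim (convex hull X) = DIM('a)"
    using full by (metis aff_dim_affine_hull aff_dim_convex_hull aff_dim_UNIV)
  ultimately show "aff_dim (convex hull X \<inter> {x. c \<bullet> x = 1}) = aff_dim (convex hull X) - 1"
    by simp
qed

lemma graph_cycle_mono: "graph_cycle F vs \<Longrightarrow> F \<subseteq> F' \<Longrightarrow> graph_cycle F' vs"
  by (auto simp: graph_cycle_def)

lemma graph_cycle_rotate_cycle:
  assumes "0 < k"
  shows "graph_cycle (cyc_ext k) (rotate i [0..<k])"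
  unfolding graph_cycle_def
proof (intro conjI allI impI)
  show "distinct (rotate i [0..<k])" by simp
  fix t assume "t < length (rotate i [0..<k])"
  then have "{rotate i [0..<k] ! t, rotate i [0..<k] ! ((t + 1) mod length (rotate i [0..<k]))}
      = {(t + i) mod k, ((t + i) mod k + 1) mod k}"
    using assms by (simp add: nth_rotate mod_simps ac_simps)
  then show "{rotate i [0..<k] ! t, rotate i [0..<k] ! ((t + 1) mod length (rotate i [0..<k]))}
      \<in> cyc_ext k"
    using assms by (auto simp: cyc_ext_def)
qed

lemma XG_iff:
  "x \<in> XG k idx \<longleftrightarrow> (\<forall>e. x $ e \<in> {0, 1}) \<and> chordal {0..<k} (cyc_ext k \<union> idx ` {e. x $ e = 1})"
proof -
  have "{idx e |e. x $ e = 1} = idx ` {e. x $ e = 1}" by blast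
  then show ?thesis by (simp add: XG_def)
qed

definition ind_vec :: "('e \<Rightarrow> bool) \<Rightarrow> real ^ 'e" where
  "ind_vec P = (\<chi> e. of_bool (P e))"

lemma ind_vec_mem_XG:
  assumes "chordal {0..<k} (cyc_ext k \<union> idx ` Collect P)"
  shows "ind_vec P \<in> XG k idx"
  using assms by (simp add: XG_iff ind_vec_def)

locale cycle_inequality =
  fixes k i :: nat and idx :: "'e::finite \<Rightarrow> nat set"
  assumes four_le_k: "4 \<le> k" and bij_idx: "bij_betw idx UNIV (cyc_Ec k)" and i_lt_k: "i < k"
begin

definition p :: nat where "p = (i + k - 1) mod k"
definition n :: nat where "n = (i + 1) mod k"

lemma p_eq: "p = (if i = 0 then k - 1 else i - 1)"
  using i_lt_k by (auto simp: p_def mod_if)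

lemma n_eq: "n = (if i + 1 = k then 0 else i + 1)"
  using i_lt_k by (auto simp: n_def)

lemma p_n_distinct: "p < k" "n < k" "p \<noteq> n" "p \<noteq> i" "n \<noteq> i"
  using four_le_k i_lt_k by (auto simp: p_eq n_eq)

lemma cycle_neighbours_of_i: "{i, w} \<in> cyc_ext k \<Longrightarrow> w = p \<or> w = n"
  using four_le_k i_lt_k by (auto simp: cyc_ext_iff p_eq n_eq mod_if split: if_splits)

lemma pn_nonedge: "{p, n} \<in> cyc_Ec k"
  using four_le_k i_lt_k p_n_distinct by (auto simp: cyc_Ec_iff cyc_ext_iff p_eq n_eq mod_if)

lemma idx_inject: "idx e = idx e' \<longleftrightarrow> e = e'"
  using bij_betw_imp_inj_on[OF bij_idx] by (auto dest: injD)

lemma idx_in_cyc_Ec: "idx e \<in> cyc_Ec k"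
  using bij_betw_imp_surj_on[OF bij_idx] by auto

lemma cyc_Ec_in_range_idx: "E \<in> cyc_Ec k \<Longrightarrow> E \<in> range idx"
  using bij_betw_imp_surj_on[OF bij_idx] by auto

definition pn_edge :: 'e where "pn_edge = inv idx {p, n}"

lemma idx_eq_pn_iff: "idx e = {p, n} \<longleftrightarrow> e = pn_edge"
  using cyc_Ec_in_range_idx[OF pn_nonedge] by (auto simp: pn_edge_def f_inv_into_f idx_inject[symmetric])

definition spokes :: "'e set" where "spokes = {e. i \<in> idx e \<and> idx e \<inter> {p, n} = {}}"

lemma pn_edge_notin_spokes: "pn_edge \<notin> spokes"
  using idx_eq_pn_iff[of pn_edge] p_n_distinct by (auto simp: spokes_def)

lemma spoke_elim:
  assumes "s \<in> spokes"
  obtains j where "j < k" "j \<noteq> i" "j \<notin> {p, n}" "idx s = {i, j}"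
proof -
  obtain a b where "idx s = {a, b}" "a < k" "b < k" "a \<noteq> b"
    using idx_in_cyc_Ec cyc_Ec_elim by blast
  then show ?thesis using that assms by (auto simp: spokes_def doubleton_eq_iff)
qed

lemma spokes_through: "s \<in> spokes \<Longrightarrow> e \<in> spokes \<Longrightarrow> idx s = {i, j} \<Longrightarrow> j \<noteq> i \<Longrightarrow> j \<in> idx e \<longleftrightarrow> e = s"
  by (auto elim!: spoke_elim simp: idx_inject[symmetric] doubleton_eq_iff)

lemma spoke_end_notin_pn_edge: "s \<in> spokes \<Longrightarrow> idx s = {i, j} \<Longrightarrow> j \<notin> idx pn_edge"
  using idx_eq_pn_iff[of pn_edge] by (auto simp: spokes_def)

lemma neighbours_of_i:
  assumes "{i, w} \<in> cyc_ext k \<union> idx ` A" and "A \<inter> spokes = {}"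
  shows "w \<in> {p, n, i}"
proof -
  consider "{i, w} \<in> cyc_ext k" | e where "e \<in> A" "idx e = {i, w}" using assms(1) by auto
  then show ?thesis
  proof cases
    case 2
    then have "e \<notin> spokes" using assms(2) by blast
    then show ?thesis using 2 p_n_distinct by (auto simp: spokes_def)
  qed (use cycle_neighbours_of_i in blast)
qed

lemma pair_mem_graph:
  assumes "a < k" "b < k" "a \<noteq> b" and "\<And>e. idx e = {a, b} \<Longrightarrow> P e"
  shows "{a, b} \<in> cyc_ext k \<union> idx ` Collect P"
  using assms cyc_Ec_in_range_idx[of "{a, b}"] by (auto simp: cyc_Ec_iff)

definition coeffs :: "real ^ 'e" where
  "coeffs = (\<chi> e. of_bool (e = pn_edge) + of_bool (e \<in> spokes))"

lemma inner_coeffs: "coeffs \<bullet> x = x $ pn_edge + (\<Sum>s\<in>spokes. x $ s)"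
  by (simp add: coeffs_def inner_vec_def distrib_right sum.distrib sum.If_cases)

lemma ineq_lhs_eq_inner: "ineq_lhs k idx i = (\<lambda>x. coeffs \<bullet> x)"
proof -
  have "{e. idx e = {p, n}} = {pn_edge}" using idx_eq_pn_iff by auto
  then show ?thesis
    unfolding ineq_lhs_def Let_def p_def[symmetric] n_def[symmetric]
    by (simp add: inner_coeffs spokes_def)
qed

lemma inner_coeffs_ind_vec: "coeffs \<bullet> ind_vec P = of_bool (P pn_edge) + card {s \<in> spokes. P s}"
  by (simp add: inner_coeffs ind_vec_def sum.If_cases Int_def)

lemma coeffs_nonzero: "coeffs \<noteq> 0"
  using pn_edge_notin_spokes by (auto simp: coeffs_def vec_eq_iff)

lemma XG_pn_edge_or_spoke:
  assumes "x \<in> XG k idx"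
  shows "x $ pn_edge = 1 \<or> (\<exists>s\<in>spokes. x $ s = 1)"
proof (rule ccontr)
  assume none: "\<not> ?thesis"
  define G where "G = cyc_ext k \<union> idx ` {e. x $ e = 1}"
  define vs where "vs = rotate i [0..<k]"
  have "chordal {0..<k} G" using assms by (simp add: XG_iff G_def)
  moreover have "{n, p} \<notin> G"
  proof
    assume "{n, p} \<in> G"
    moreover have "{p, n} \<notin> cyc_ext k" using pn_nonedge by (simp add: cyc_Ec_def)
    ultimately obtain e where "idx e = {p, n}" "x $ e = 1" by (auto simp: G_def insert_commute)
    then show False using none idx_eq_pn_iff by auto
  qed
  moreover have "w \<in> {p, n, i}" if "{i, w} \<in> G" for w
    using neighbours_of_i[of w "{e. x $ e = 1}"] that none by (auto simp: G_def)
  moreover have "graph_cycle G vs"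
    unfolding vs_def
    by (rule graph_cycle_mono[OF graph_cycle_rotate_cycle]) (use four_le_k in \<open>auto simp: G_def\<close>)
  moreover have "vs ! 0 = i" "vs ! 1 = n" "vs ! (length vs - 1) = p"
    using four_le_k i_lt_k by (auto simp: vs_def nth_rotate n_def p_def ac_simps)
  ultimately show False
    using chordal_no_cycle_through_degree_two_vertex[of "{0..<k}" G n p i vs] four_le_k
    by (auto simp: vs_def)
qed

lemma valid_on_XG:
  assumes "x \<in> XG k idx"
  shows "1 \<le> coeffs \<bullet> x"
proof -
  have "x $ e \<in> {0, 1}" for e using assms by (simp add: XG_iff)
  then have nonneg: "0 \<le> x $ e" for e by (metis empty_iff insert_iff order.refl zero_le_one)
  from XG_pn_edge_or_spoke[OF assms] show ?thesis
  proof
    assume "x $ pn_edge = 1"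
    then show ?thesis using nonneg by (simp add: inner_coeffs sum_nonneg)
  next
    assume "\<exists>s\<in>spokes. x $ s = 1"
    then obtain s where "s \<in> spokes" "x $ s = 1" by blast
    then have "1 \<le> (\<Sum>s\<in>spokes. x $ s)" using nonneg by (metis finite member_le_sum)
    then show ?thesis using nonneg[of pn_edge] by (simp add: inner_coeffs)
  qed
qed

lemma ind_vec_mem_XG_if_one_pair_missing:
  assumes "\<And>e. idx e \<noteq> {r1, r2} \<Longrightarrow> P e"
  shows "ind_vec P \<in> XG k idx"
proof (intro ind_vec_mem_XG chordal_if_simplicial_vertex_and_complete_but_one_pair[where v = r1])
  show pair: "{a, b} \<in> cyc_ext k \<union> idx ` Collect P"
    if "a \<in> {0..<k}" "b \<in> {0..<k}" "a \<noteq> b" "{a, b} \<noteq> {r1, r2}" for a b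
    using that assms by (intro pair_mem_graph) auto
  then show "simplicial (cyc_ext k \<union> idx ` Collect P) {0..<k} r1"
    by (auto simp: simplicial_def doubleton_eq_iff)
qed

lemma ind_vec_mem_XG_if_spoke_free:
  assumes no_spokes: "\<And>e. e \<in> spokes \<Longrightarrow> \<not> P e" and "P pn_edge"
    and others: "\<And>e. e \<notin> spokes \<Longrightarrow> idx e \<noteq> {r1, r2} \<Longrightarrow> P e"
  shows "ind_vec P \<in> XG k idx"
proof (intro ind_vec_mem_XG chordal_if_simplicial_vertex_and_complete_but_one_pair[where v = i])
  define G where "G = cyc_ext k \<union> idx ` Collect P"
  have "{p, n} \<in> G" using \<open>P pn_edge\<close> idx_eq_pn_iff[of pn_edge] by (auto simp: G_def)
  moreover have nbrs: "w \<in> {p, n}" if "{i, w} \<in> G" "w \<noteq> i" for w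
    using neighbours_of_i[of w "Collect P"] that no_spokes by (auto simp: G_def)
  ultimately show "simplicial (cyc_ext k \<union> idx ` Collect P) {0..<k} i"
    unfolding simplicial_def G_def[symmetric]
  proof (intro ballI impI)
    fix a b assume "a \<noteq> i" "b \<noteq> i" "a \<noteq> b" "{i, a} \<in> G" "{i, b} \<in> G"
    then have "{a, b} = {p, n}" using nbrs by blast
    then show "{a, b} \<in> G" using \<open>{p, n} \<in> G\<close> by simp
  qed
  show "{a, b} \<in> cyc_ext k \<union> idx ` Collect P"
    if "a \<in> {0..<k}" "b \<in> {0..<k}" "a \<noteq> b" "a \<noteq> i" "b \<noteq> i" "{a, b} \<noteq> {r1, r2}" for a b
    using that others by (intro pair_mem_graph) (auto simp: spokes_def)
qed

lemma fan_mem_XG: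
  assumes "j < k"
  shows "ind_vec (\<lambda>e. j \<in> idx e) \<in> XG k idx"
proof (intro ind_vec_mem_XG chordal_cycle_with_apex[OF assms])
  show "{j, a} \<in> cyc_ext k \<union> idx ` {e. j \<in> idx e}" if "a < k" "a \<noteq> j" for a
    using that assms by (intro pair_mem_graph) auto
qed auto

lemma affine_hull_XG: "affine hull XG k idx = UNIV"
proof (rule affine_hull_eq_UNIV_if_unit_steps)
  show "ind_vec (\<lambda>_. True) \<in> XG k idx"
    by (rule ind_vec_mem_XG_if_one_pair_missing[of 0 0]) simp
  fix e
  obtain r1 r2 where "idx e = {r1, r2}" using idx_in_cyc_Ec cyc_Ec_elim by metis
  then have "ind_vec (\<lambda>e'. e' \<noteq> e) \<in> XG k idx"
    by (intro ind_vec_mem_XG_if_one_pair_missing[of r1 r2]) auto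
  moreover have "ind_vec (\<lambda>e'. e' \<noteq> e) = ind_vec (\<lambda>_. True) - axis e 1"
    by (simp add: vec_eq_iff ind_vec_def axis_def)
  ultimately show "ind_vec (\<lambda>_. True) - axis e 1 \<in> XG k idx" by simp
qed

abbreviation face :: "(real ^ 'e) set" where
  "face \<equiv> XG k idx \<inter> {x. coeffs \<bullet> x = 1}"

lemma spoke_free_point_in_face: "ind_vec (\<lambda>e. e \<notin> spokes) \<in> face"
  using ind_vec_mem_XG_if_spoke_free[of "\<lambda>e. e \<notin> spokes" 0 0] pn_edge_notin_spokes
  by (simp add: inner_coeffs_ind_vec)

lemma spoke_free_point_minus_edge_in_face:
  assumes "r \<notin> insert pn_edge spokes"
  shows "ind_vec (\<lambda>e. e \<notin> spokes \<and> e \<noteq> r) \<in> face"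
proof -
  obtain r1 r2 where "idx r = {r1, r2}" using idx_in_cyc_Ec cyc_Ec_elim by metis
  then show ?thesis
    using assms pn_edge_notin_spokes ind_vec_mem_XG_if_spoke_free[of "\<lambda>e. e \<notin> spokes \<and> e \<noteq> r" r1 r2]
    by (auto simp: inner_coeffs_ind_vec idx_inject)
qed

lemma fan_point_in_face:
  assumes "s \<in> spokes" "idx s = {i, j}" "j \<noteq> i"
  shows "ind_vec (\<lambda>e. j \<in> idx e) \<in> face"
proof -
  have "{e \<in> spokes. j \<in> idx e} = {s}" using assms spokes_through by blast
  moreover have "j \<notin> idx pn_edge" using assms(1,2) by (rule spoke_end_notin_pn_edge)
  moreover have "j < k" using idx_in_cyc_Ec[of s] assms(2) by (simp add: cyc_Ec_iff)
  ultimately show ?thesis by (simp add: fan_mem_XG inner_coeffs_ind_vec)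
qed

lemma hyperplane_subset_affine_hull_face: "{x. coeffs \<bullet> x = 1} \<subseteq> affine hull face"
  \<comment> \<open>Besides the coordinate vectors off \<open>pn_edge\<close> and the spokes, the fan at the far end of a
    spoke \<open>s\<close> supplies \<open>axis s 1 - axis pn_edge 1\<close>.\<close>
proof
  fix w assume w: "w \<in> {x. coeffs \<bullet> x = 1}"
  define y where "y = ind_vec (\<lambda>e. e \<notin> spokes)"
  define T where "T = (+) (- y) ` face"
  have y: "y \<in> face" using spoke_free_point_in_face by (simp add: y_def)
  have diff_in_T: "- y + z \<in> span T" if "z \<in> face" for z
    using that by (auto simp: T_def intro: span_base)
  have axis_outside: "axis r 1 \<in> span T" if r: "r \<notin> insert pn_edge spokes" for r
  proof -
    have "- y + ind_vec (\<lambda>e. e \<notin> spokes \<and> e \<noteq> r) = - axis r 1"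
      using r by (auto simp: vec_eq_iff y_def ind_vec_def axis_def)
    then show ?thesis
      using diff_in_T[OF spoke_free_point_minus_edge_in_face[OF r]] span_neg by fastforce
  qed
  have axis_spoke: "axis s 1 - axis pn_edge 1 \<in> span T" if s: "s \<in> spokes" for s
  proof -
    obtain j where j: "j \<noteq> i" "idx s = {i, j}" using s spoke_elim by blast
    define d where "d = - y + ind_vec (\<lambda>e. j \<in> idx e)"
    have "d \<in> span T" using diff_in_T[OF fan_point_in_face[OF s j(2,1)]] by (simp add: d_def)
    moreover have "d - (axis s 1 - axis pn_edge 1) \<in> span T"
    proof (rule span_of_vector_supported_on[OF axis_outside])
      show "(d - (axis s 1 - axis pn_edge 1)) $ e = 0" if "e \<notin> - insert pn_edge spokes" for e
        using that s j pn_edge_notin_spokes spoke_end_notin_pn_edge[OF s j(2)] spokes_through[OF s _ j(2,1)]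
        by (auto simp: d_def y_def ind_vec_def axis_def inner_coeffs_ind_vec)
    qed auto
    ultimately show ?thesis using span_diff by fastforce
  qed
  have "- y + w \<in> span T"
    using w y by (intro span_of_vector_in_hyperplane[OF pn_edge_notin_spokes axis_outside axis_spoke])
      (auto simp: inner_coeffs sum_subtractf)
  then have "y + (- y + w) \<in> (+) y ` span T" by (rule imageI)
  then show "w \<in> affine hull face" by (simp add: affine_hull_span_gen[OF hull_inc[OF y]] T_def)
qed

end

theorem proposition3:
  fixes k i :: nat and idx :: "'e::finite \<Rightarrow> nat set"
  assumes "k \<ge> 4" and "bij_betw idx UNIV (cyc_Ec k)" and "i < k"
  shows "(\<forall>x \<in> convex hull (XG k idx). ineq_lhs k idx i x \<ge> 1) \<and>
         (convex hull (XG k idx) \<inter> {x. ineq_lhs k idx i x = 1}) face_of convex hull (XG k idx) \<and>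
         aff_dim (convex hull (XG k idx) \<inter> {x. ineq_lhs k idx i x = 1})
           = aff_dim (convex hull (XG k idx)) - 1"
proof -
  interpret cycle_inequality k i idx using assms by unfold_locales
  show ?thesis
    unfolding ineq_lhs_eq_inner
    by (rule hyperplane_facet_of_convex_hull[OF valid_on_XG affine_hull_XG hyperplane_subset_affine_hull_face
          coeffs_nonzero])
qed

end
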